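(* Let $M,N,p,r\ge1$. If at least one of $i$, $a$, $b$ has all its entries equal, then $(E_x)$ holds for all $x$. The normalized number of such triples, $$\alpha_p^r(M,N)=\frac{1}{M^{p+r}N^p}\#\{(i,a,b):\ i\text{ or }a\text{ or }b\text{ is constant}\},$$ equals $1-\frac{(M^p-M)(M^r-M)(N^p-N)}{M^{p+r}N^p}$, and $\alpha_p^r(M,N)=d_p^r(M,N)$ whenever $M=1$, or $N=1$, or $r=1$, or $p\le 2$.
   Context: For integers $M,N,p,r\ge1$, consider triples $(i,a,b)$ with $i=(i_1,\dots,i_r)\in\mathbb Z_M^r$, $a=(a_1,\dots,a_p)\in\mathbb Z_M^p$, $b=(b_1,\dots,b_p)\in\mathbb Z_N^p$, with cyclic conventions $i_{r+1}=i_1$, $b_{p+1}=b_1$. For $x\in\{1,\dots,r\}$, condition $(E_x)$ says that the multisets $\{(i_x+a_y,b_y),(i_{x+1}+a_y,b_{y+1}):y=1,\dots,p\}$ and $\{(i_x+a_y,b_{y+1}),(i_{x+1}+a_y,b_y):y=1,\dots,p\}$ of elements of $\mathbb Z_M\times\mathbb Z_N$ (counted with multiplicity) coincide. Define $d_p^r(M,N)=\frac{1}{M^{p+r}N^p}\#\{(i,a,b):(E_x)\text{ holds for all }x\}$. A tuple is called constant if all its entries are equal. *)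

theory Defs
  imports Main "HOL-Library.Multiset" "HOL-Library.FuncSet" Complex_Main
begin

text \<open>Z_M is represented by {0..<M} with arithmetic mod M. A tuple
 (i_1,...,i_r) in Z_M^r is a function in PiE {..<r} (\<lambda>_. {..<M}),
 with 0-based indices; the cyclic successor of x is Suc x mod r.\<close>

definition triples :: "nat \<Rightarrow> nat \<Rightarrow> nat \<Rightarrow> nat \<Rightarrow>
    ((nat \<Rightarrow> nat) \<times> (nat \<Rightarrow> nat) \<times> (nat \<Rightarrow> nat)) set" where
  "triples M N p r = PiE {..<r} (\<lambda>_. {..<M}) \<times> PiE {..<p} (\<lambda>_. {..<M}) \<times> PiE {..<p} (\<lambda>_. {..<N})"

definition cond_E :: "nat \<Rightarrow> nat \<Rightarrow> nat \<Rightarrow> (nat \<Rightarrow> nat) \<Rightarrow> (nat \<Rightarrow> nat) \<Rightarrow> (nat \<Rightarrow> nat) \<Rightarrow> nat \<Rightarrow> bool" where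
  "cond_E M p r i a b x \<longleftrightarrow>
     image_mset (\<lambda>y. ((i x + a y) mod M, b y)) (mset_set {..<p})
   + image_mset (\<lambda>y. ((i (Suc x mod r) + a y) mod M, b (Suc y mod p))) (mset_set {..<p})
   = image_mset (\<lambda>y. ((i x + a y) mod M, b (Suc y mod p))) (mset_set {..<p})
   + image_mset (\<lambda>y. ((i (Suc x mod r) + a y) mod M, b y)) (mset_set {..<p})"

definition is_constant :: "nat \<Rightarrow> (nat \<Rightarrow> nat) \<Rightarrow> bool" where
  "is_constant n f \<longleftrightarrow> (\<forall>j<n. \<forall>k<n. f j = f k)"

definition d_pr :: "nat \<Rightarrow> nat \<Rightarrow> nat \<Rightarrow> nat \<Rightarrow> real" where
  "d_pr p r M N = real (card {(i,a,b) \<in> triples M N p r. \<forall>x<r. cond_E M p r i a b x})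
      / (real M ^ (p + r) * real N ^ p)"

definition alpha_pr :: "nat \<Rightarrow> nat \<Rightarrow> nat \<Rightarrow> nat \<Rightarrow> real" where
  "alpha_pr p r M N = real (card {(i,a,b) \<in> triples M N p r.
        is_constant r i \<or> is_constant p a \<or> is_constant p b})
      / (real M ^ (p + r) * real N ^ p)"

end

theory Submission
  imports Defs "HOL-Number_Theory.Cong"
begin

text \<open>If one of i, a, b is constant, the two multisets of (E_x) agree termwise, after
  rotating b by one place when a is constant. The triples with no constant entry form a product
  of three sets of non-constant tuples, which gives the count. Conversely, for p = 2 with a and
  b non-constant, the point (i_x + a_1, b_1) on the left of (E_x) can only reappear on the right
  as (i_(x+1) + a_1, b_1), forcing i_(x+1) = i_x for every x; for M = 1, N = 1, r = 1 or
  p = 1 some tuple is trivially constant.\<close>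

lemma bij_betw_Suc_mod: "bij_betw (\<lambda>y. Suc y mod p) {..<p} {..<p}"
proof (cases "p = 0")
  case False
  have "inj_on (\<lambda>y. Suc y mod p) {..<p}"
  proof (rule inj_onI)
    fix x y assume "x \<in> {..<p}" "y \<in> {..<p}" "Suc x mod p = Suc y mod p"
    then show "x = y"
      by (metis Suc_inject lessThan_iff mod_Suc mod_less nat.distinct(1))
  qed
  moreover have "(\<lambda>y. Suc y mod p) ` {..<p} \<subseteq> {..<p}"
    using False by auto
  ultimately show ?thesis
    by (simp add: bij_betw_def card_image card_subset_eq)
qed simp

lemma image_mset_rotate:
  "image_mset (\<lambda>y. h (Suc y mod p)) (mset_set {..<p}) = image_mset h (mset_set {..<p})"
proof -
  have "image_mset (\<lambda>y. Suc y mod p) (mset_set {..<p}) = mset_set {..<p}"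
    using bij_betw_Suc_mod by (simp add: image_mset_mset_set bij_betw_def)
  then have "image_mset h (image_mset (\<lambda>y. Suc y mod p) (mset_set {..<p})) = image_mset h (mset_set {..<p})"
    by simp
  then show ?thesis
    by (simp add: multiset.map_comp comp_def)
qed

lemma is_constant_iff_ex: "is_constant n f \<longleftrightarrow> (\<exists>c. \<forall>j<n. f j = c)"
  unfolding is_constant_def by (metis gr_implies_not0 neq0_conv)

lemma cond_E_if_constant:
  assumes "x < r" "is_constant r i \<or> is_constant p a \<or> is_constant p b"
  shows "cond_E M p r i a b x"
  using assms(2)
proof (elim disjE)
  assume "is_constant r i"
  then obtain c where "\<forall>j<r. i j = c"
    by (auto simp: is_constant_iff_ex)
  with \<open>x < r\<close> have "i (Suc x mod r) = i x"
    by (metis mod_less_divisor order_le_less_trans zero_le)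
  then show ?thesis
    unfolding cond_E_def by (simp add: add.commute)
next
  assume "is_constant p a"
  then obtain c where a: "\<forall>j<p. a j = c"
    by (auto simp: is_constant_iff_ex)
  have "image_mset (\<lambda>y. ((u + a y) mod M, b y)) (mset_set {..<p})
      = image_mset (\<lambda>y. ((u + a y) mod M, b (Suc y mod p))) (mset_set {..<p})" for u
  proof -
    have "image_mset (\<lambda>y. ((u + a y) mod M, b y)) (mset_set {..<p})
        = image_mset (\<lambda>y. ((u + c) mod M, b y)) (mset_set {..<p})"
      using a by (intro image_mset_cong) simp
    also have "\<dots> = image_mset (\<lambda>y. ((u + c) mod M, b (Suc y mod p))) (mset_set {..<p})"
      by (rule image_mset_rotate [symmetric])
    also have "\<dots> = image_mset (\<lambda>y. ((u + a y) mod M, b (Suc y mod p))) (mset_set {..<p})"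
      using a by (intro image_mset_cong) simp
    finally show ?thesis .
  qed
  then show ?thesis
    unfolding cond_E_def by (simp only:)
next
  assume "is_constant p b"
  then obtain c where "\<forall>j<p. b j = c"
    by (auto simp: is_constant_iff_ex)
  then have "b (Suc y mod p) = b y" if "y \<in># mset_set {..<p}" for y
    using that by (metis elem_mset_set finite_lessThan lessThan_iff mod_less_divisor neq0_conv not_less0)
  then have "image_mset (\<lambda>y. ((u + a y) mod M, b (Suc y mod p))) (mset_set {..<p})
      = image_mset (\<lambda>y. ((u + a y) mod M, b y)) (mset_set {..<p})" for u
    by (intro image_mset_cong) simp
  then show ?thesis
    unfolding cond_E_def by (simp only:)
qed

lemma constant_PiE_eq:
  assumes "n > 0"
  shows "{f \<in> PiE {..<n} (\<lambda>_. A). is_constant n f} = (\<lambda>c. restrict (\<lambda>_. c) {..<n}) ` A"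
proof (intro set_eqI iffI)
  fix f
  assume f: "f \<in> {f \<in> PiE {..<n} (\<lambda>_. A). is_constant n f}"
  then obtain c where c: "\<forall>j<n. f j = c"
    by (auto simp: is_constant_iff_ex)
  with f have "f = restrict (\<lambda>_. c) {..<n}"
    by (intro ext) (auto simp: PiE_iff extensional_def)
  moreover have "c \<in> A"
    using f c assms by auto
  ultimately show "f \<in> (\<lambda>c. restrict (\<lambda>_. c) {..<n}) ` A"
    by blast
qed (auto simp: is_constant_def split: if_split_asm)

lemma card_constant_PiE:
  assumes "n > 0"
  shows "card {f \<in> PiE {..<n} (\<lambda>_. A). is_constant n f} = card A"
proof -
  have "inj_on (\<lambda>c. restrict (\<lambda>_. c) {..<n}) A"
    using assms by (intro inj_onI) (metis lessThan_iff restrict_apply')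
  then show ?thesis
    by (simp add: constant_PiE_eq [OF assms] card_image)
qed

lemma card_nonconstant_PiE:
  assumes "n > 0"
  shows "card {f \<in> PiE {..<n} (\<lambda>_. {..<K}). \<not> is_constant n f} = K ^ n - K"
proof -
  let ?A = "PiE {..<n} (\<lambda>_. {..<K})"
  have "{f \<in> ?A. \<not> is_constant n f} = ?A - {f \<in> ?A. is_constant n f}"
    by blast
  then show ?thesis
    using card_constant_PiE [OF assms, of "{..<K}"]
    by (simp add: card_Diff_subset finite_PiE card_PiE)
qed

lemma triples_without_constant:
  "triples M N p r - {(i, a, b) \<in> triples M N p r. is_constant r i \<or> is_constant p a \<or> is_constant p b}
    = {i \<in> PiE {..<r} (\<lambda>_. {..<M}). \<not> is_constant r i}
      \<times> {a \<in> PiE {..<p} (\<lambda>_. {..<M}). \<not> is_constant p a}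
      \<times> {b \<in> PiE {..<p} (\<lambda>_. {..<N}). \<not> is_constant p b}"
  unfolding triples_def by auto

lemma card_triples_with_constant:
  assumes "p > 0" "r > 0"
  shows "real (card {(i, a, b) \<in> triples M N p r. is_constant r i \<or> is_constant p a \<or> is_constant p b})
    = real M ^ (p + r) * real N ^ p
      - (real M ^ p - real M) * (real M ^ r - real M) * (real N ^ p - real N)"
proof -
  let ?T = "triples M N p r"
  let ?C = "{(i, a, b) \<in> ?T. is_constant r i \<or> is_constant p a \<or> is_constant p b}"
  have "finite ?T"
    unfolding triples_def by (simp add: finite_PiE)
  have "card ?T = card (?C \<union> (?T - ?C))"
    by (rule arg_cong [where f = card]) blast
  also have "\<dots> = card ?C + card (?T - ?C)"
    using \<open>finite ?T\<close> by (intro card_Un_disjoint) (auto intro: rev_finite_subset)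
  finally have "real (card ?C) = real (card ?T) - real (card (?T - ?C))"
    by simp
  moreover have "real (card ?T) = real M ^ (p + r) * real N ^ p"
    unfolding triples_def by (simp add: card_cartesian_product card_PiE power_add)
  moreover have "K \<le> K ^ n" if "n > 0" for K n :: nat
    using that by (cases "K = 0") (simp_all add: self_le_power)
  then have "real (card (?T - ?C))
      = (real M ^ p - real M) * (real M ^ r - real M) * (real N ^ p - real N)"
    unfolding triples_without_constant card_cartesian_product
    using assms by (simp add: card_nonconstant_PiE of_nat_diff)
  ultimately show ?thesis
    by simp
qed

lemma alpha_pr_formula:
  assumes "M > 0" "N > 0" "p > 0" "r > 0"
  shows "alpha_pr p r M N
    = 1 - (real M ^ p - real M) * (real M ^ r - real M) * (real N ^ p - real N)
            / (real M ^ (p + r) * real N ^ p)"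
  using assms unfolding alpha_pr_def card_triples_with_constant [OF assms(3,4)]
  by (simp add: diff_divide_distrib)

lemma is_constant_if_cyclic_step:
  assumes "\<forall>x<r. i (Suc x mod r) = i x"
  shows "is_constant r i"
proof -
  have "i k = i 0" if "k < r" for k
    using that
  proof (induction k)
    case (Suc k)
    with assms have "i (Suc k) = i k"
      by (metis Suc_lessD mod_less)
    with Suc show ?case
      by simp
  qed simp
  then show ?thesis
    unfolding is_constant_def by metis
qed

lemma cond_E_two_step:
  assumes E: "cond_E M 2 r i a b x"
    and "i x < M" "i (Suc x mod r) < M" "a 0 < M" "a 1 < M"
    and "a 0 \<noteq> a 1" "b 0 \<noteq> b 1"
  shows "i (Suc x mod r) = i x"
proof -
  let ?u = "i x" and ?v = "i (Suc x mod r)"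
  have two: "mset_set {..<2::nat} = {#0, 1#}"
    by (simp add: numeral_2_eq_2 lessThan_Suc)
  from E have "{#((?u + a 0) mod M, b 0), ((?u + a 1) mod M, b 1)#}
      + {#((?v + a 0) mod M, b 1), ((?v + a 1) mod M, b 0)#}
    = {#((?u + a 0) mod M, b 1), ((?u + a 1) mod M, b 0)#}
      + {#((?v + a 0) mod M, b 0), ((?v + a 1) mod M, b 1)#}"
    unfolding cond_E_def two by simp
  then have "((?u + a 0) mod M, b 0) \<in>#
      {#((?u + a 0) mod M, b 1), ((?u + a 1) mod M, b 0)#}
      + {#((?v + a 0) mod M, b 0), ((?v + a 1) mod M, b 1)#}"
    by (metis add_mset_add_single union_iff mset_subset_eq_single multi_member_this)
  moreover have "(?u + a 1) mod M \<noteq> (?u + a 0) mod M"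
    using assms(4-6) cong_add_lcancel_nat [of ?u "a 1" "a 0" M] by (simp add: cong_def)
  ultimately have "(?v + a 0) mod M = (?u + a 0) mod M"
    using assms(7) by auto
  then show ?thesis
    using assms(2,3) cong_add_rcancel_nat [of ?v "a 0" ?u M] by (simp add: cong_def)
qed

lemma constant_if_cond_E:
  assumes "(i, a, b) \<in> triples M N p r" "\<forall>x<r. cond_E M p r i a b x"
    and "M = 1 \<or> N = 1 \<or> r = 1 \<or> p = 1 \<or> p = 2"
  shows "is_constant r i \<or> is_constant p a \<or> is_constant p b"
proof -
  have i: "i \<in> PiE {..<r} (\<lambda>_. {..<M})" and a: "a \<in> PiE {..<p} (\<lambda>_. {..<M})"
    and b: "b \<in> PiE {..<p} (\<lambda>_. {..<N})"
    using assms(1) unfolding triples_def by auto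
  consider "M = 1" | "N = 1" | "r = 1" | "p = 1" | "p = 2"
    using assms(3) by blast
  then show ?thesis
  proof cases
    case 1
    with a show ?thesis
      by (auto simp: is_constant_def PiE_iff)
  next
    case 2
    with b show ?thesis
      by (auto simp: is_constant_def PiE_iff)
  next
    case 3
    then show ?thesis
      by (simp add: is_constant_def)
  next
    case 4
    then show ?thesis
      by (simp add: is_constant_def)
  next
    case 5
    have const2: "is_constant 2 f \<longleftrightarrow> f 0 = f 1" for f :: "nat \<Rightarrow> nat"
      unfolding is_constant_def by (auto simp: less_2_cases_iff)
    show ?thesis
    proof (rule ccontr)
      assume "\<not> ?thesis"
      with 5 have "a 0 \<noteq> a 1" "b 0 \<noteq> b 1" "\<not> is_constant r i"
        by (auto simp: const2)
      moreover have "\<forall>x<r. i (Suc x mod r) = i x"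
      proof (intro allI impI)
        fix x
        assume "x < r"
        with 5 assms(2) i a \<open>a 0 \<noteq> a 1\<close> \<open>b 0 \<noteq> b 1\<close> show "i (Suc x mod r) = i x"
          using cond_E_two_step [of M r i a b x] by (simp add: PiE_iff)
      qed
      ultimately show False
        using is_constant_if_cyclic_step by blast
    qed
  qed
qed

lemma d_pr_eq_alpha_pr:
  assumes "p > 0" "r > 0" "M = 1 \<or> N = 1 \<or> r = 1 \<or> p \<le> 2"
  shows "d_pr p r M N = alpha_pr p r M N"
proof -
  have "{(i, a, b) \<in> triples M N p r. \<forall>x<r. cond_E M p r i a b x}
      = {(i, a, b) \<in> triples M N p r. is_constant r i \<or> is_constant p a \<or> is_constant p b}"
    using assms constant_if_cond_E [of _ _ _ M N p r] cond_E_if_constant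
    by (auto simp: le_Suc_eq numeral_2_eq_2)
  then show ?thesis
    unfolding d_pr_def alpha_pr_def by simp
qed

theorem proposition3p3:
  fixes M N p r :: nat
  assumes "M \<ge> 1" "N \<ge> 1" "p \<ge> 1" "r \<ge> 1"
  shows "(\<forall>(i,a,b) \<in> triples M N p r.
            (is_constant r i \<or> is_constant p a \<or> is_constant p b)
              \<longrightarrow> (\<forall>x<r. cond_E M p r i a b x))
       \<and> alpha_pr p r M N
           = 1 - (real M ^ p - real M) * (real M ^ r - real M) * (real N ^ p - real N)
                   / (real M ^ (p + r) * real N ^ p)
       \<and> ((M = 1 \<or> N = 1 \<or> r = 1 \<or> p \<le> 2) \<longrightarrow> alpha_pr p r M N = d_pr p r M N)"
  using assms cond_E_if_constant alpha_pr_formula d_pr_eq_alpha_pr by auto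

end
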